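(* Let $G$ be a non-empty graph on $n$ vertices. Then $G$ has a spanning subgraph $G'$ with $e(G')\geq e(G)/2$ such that, if $q$ denotes the number of copies of $C_4$ in $G'$, every edge of $G'$ belongs to at most $\frac{16\log n}{e(G')}q$ copies of $C_4$ in $G'$.
   Context: A copy of $C_4$ is a subgraph isomorphic to the $4$-cycle. $\log$ is the natural logarithm; $e(\cdot)$ denotes number of edges. *)

theory Defs
  imports Complex_Main
begin

definition simple_graph :: "'a set \<Rightarrow> 'a set set \<Rightarrow> bool" where
  "simple_graph V E \<longleftrightarrow> finite V \<and> (\<forall>e\<in>E. e \<subseteq> V \<and> card e = 2)"

text \<open>Copies of C4 in a graph with edge set E, each copy identified with its edge set
  (a copy of C4 is determined by its four edges).\<close>
definition C4_copies :: "'a set set \<Rightarrow> 'a set set set" where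
  "C4_copies E = {{{a,b},{b,c},{c,d},{d,a}} | a b c d.
      distinct [a,b,c,d] \<and> {a,b} \<in> E \<and> {b,c} \<in> E \<and> {c,d} \<in> E \<and> {d,a} \<in> E}"

end

theory Submission
  imports Defs
begin

text \<open>Delete, one at a time, an edge lying in more than \<open>c / e(F)\<close> times the number of
  copies of \<open>C\<^sub>4\<close> of the current graph \<open>F\<close>, where \<open>c = 16 log n\<close>. Each deletion multiplies
  the number of copies by less than \<open>1 - c / e(G)\<close>. If the process ran for \<open>e(G)/2\<close> steps, at
  most \<open>n\<^sup>4 (1 - c/e(G))\<^bsup>e(G)/2\<^esup> < 1\<close> copies would remain, so none would remain and the graph
  reached would satisfy the bound trivially. Hence the process stops while at least half of
  the edges survive.\<close>

definition C4_edge_count :: "'a set set \<Rightarrow> 'a set \<Rightarrow> nat" where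
  "C4_edge_count F e = card {C \<in> C4_copies F. e \<in> C}"

definition C4_balanced :: "real \<Rightarrow> 'a set set \<Rightarrow> bool" where
  "C4_balanced c F \<longleftrightarrow>
     (\<forall>e\<in>F. real (C4_edge_count F e) \<le> c / real (card F) * real (card (C4_copies F)))"

lemma C4_copies_iff:
  "C \<in> C4_copies F \<longleftrightarrow> (\<exists>a b c d. C = {{a,b},{b,c},{c,d},{d,a}} \<and>
      distinct [a,b,c,d] \<and> {a,b} \<in> F \<and> {b,c} \<in> F \<and> {c,d} \<in> F \<and> {d,a} \<in> F)"
  unfolding C4_copies_def by (rule mem_Collect_eq)

lemma C4_copies_eq_subsets: "C4_copies F = {C \<in> C4_copies UNIV. C \<subseteq> F}"
proof (rule set_eqI)
  fix C
  show "C \<in> C4_copies F \<longleftrightarrow> C \<in> {C \<in> C4_copies UNIV. C \<subseteq> F}"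
  proof
    assume "C \<in> C4_copies F"
    then obtain a b c d where C: "C = {{a,b},{b,c},{c,d},{d,a}}" "distinct [a,b,c,d]"
      "{a,b} \<in> F" "{b,c} \<in> F" "{c,d} \<in> F" "{d,a} \<in> F"
      unfolding C4_copies_iff by blast
    have "C \<in> C4_copies UNIV"
      unfolding C4_copies_iff using C(1,2) by blast
    moreover have "C \<subseteq> F"
      using C by simp
    ultimately show "C \<in> {C \<in> C4_copies UNIV. C \<subseteq> F}"
      by simp
  next
    assume "C \<in> {C \<in> C4_copies UNIV. C \<subseteq> F}"
    then have "C \<in> C4_copies UNIV" and "C \<subseteq> F"
      by auto
    then obtain a b c d where C: "C = {{a,b},{b,c},{c,d},{d,a}}" "distinct [a,b,c,d]"
      unfolding C4_copies_iff by blast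
    have "{a,b} \<in> F" "{b,c} \<in> F" "{c,d} \<in> F" "{d,a} \<in> F"
      using \<open>C \<subseteq> F\<close> C(1) by auto
    then show "C \<in> C4_copies F"
      unfolding C4_copies_iff using C by blast
  qed
qed

lemma C4_copies_Diff_singleton: "C4_copies (F - {e}) = {C \<in> C4_copies F. e \<notin> C}"
proof -
  have "C4_copies (F - {e}) = {C \<in> C4_copies UNIV. C \<subseteq> F - {e}}"
    by (rule C4_copies_eq_subsets)
  also have "\<dots> = {C \<in> {C \<in> C4_copies UNIV. C \<subseteq> F}. e \<notin> C}"
    by blast
  also have "\<dots> = {C \<in> C4_copies F. e \<notin> C}"
    by (simp only: C4_copies_eq_subsets[of F, symmetric])
  finally show ?thesis .
qed

lemma finite_C4_copies: "finite F \<Longrightarrow> finite (C4_copies F)"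
  by (rule finite_subset[of _ "Pow F"]) (auto simp: C4_copies_eq_subsets[of F])

lemma C4_edge_count_le: "finite F \<Longrightarrow> C4_edge_count F e \<le> card (C4_copies F)"
  unfolding C4_edge_count_def by (intro card_mono finite_C4_copies) auto

lemma card_C4_copies_Diff_singleton:
  assumes "finite F"
  shows "card (C4_copies F) = card (C4_copies (F - {e})) + C4_edge_count F e"
proof -
  have "C4_copies F = {C \<in> C4_copies F. e \<notin> C} \<union> {C \<in> C4_copies F. e \<in> C}"
    by blast
  then have "card (C4_copies F) = card {C \<in> C4_copies F. e \<notin> C} + card {C \<in> C4_copies F. e \<in> C}"
    using finite_C4_copies[OF assms] by (metis (no_types, lifting) card_Un_disjoint
        disjoint_iff finite_Un mem_Collect_eq)
  then show ?thesis
    unfolding C4_copies_Diff_singleton C4_edge_count_def .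
qed

lemma card_C4_copies_le:
  assumes "simple_graph V E"
  shows "card (C4_copies E) \<le> card V ^ 4"
proof -
  let ?cycle = "\<lambda>(a, b, c, d). {{a,b},{b,c},{c,d},{d,a}}"
  have fin: "finite V"
    using assms unfolding simple_graph_def by simp
  have "C4_copies E \<subseteq> ?cycle ` (V \<times> V \<times> V \<times> V)"
  proof
    fix C assume "C \<in> C4_copies E"
    then obtain a b c d where C: "C = {{a,b},{b,c},{c,d},{d,a}}" and "{a,b} \<in> E" "{c,d} \<in> E"
      unfolding C4_copies_iff by blast
    then have "a \<in> V" "b \<in> V" "c \<in> V" "d \<in> V"
      using assms unfolding simple_graph_def by auto
    with C show "C \<in> ?cycle ` (V \<times> V \<times> V \<times> V)"
      by (intro image_eqI[where x = "(a, b, c, d)"]) auto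
  qed
  then have "card (C4_copies E) \<le> card (?cycle ` (V \<times> V \<times> V \<times> V))"
    using fin by (intro card_mono) auto
  also have "\<dots> \<le> card (V \<times> V \<times> V \<times> V)"
    by (rule card_image_le) (use fin in auto)
  also have "\<dots> = card V ^ 4"
    by (simp add: card_cartesian_product power4_eq_xxxx)
  finally show ?thesis .
qed

lemma C4_balanced_if_card_le:
  assumes "finite F" and "real (card F) \<le> c"
  shows "C4_balanced c F"
  unfolding C4_balanced_def
proof
  fix e assume "e \<in> F"
  then have "card F > 0"
    using assms(1) card_gt_0_iff by blast
  then have "1 \<le> c / real (card F)"
    using assms(2) by simp
  then have "1 * real (card (C4_copies F)) \<le> c / real (card F) * real (card (C4_copies F))"
    by (rule mult_right_mono) simp
  then show "real (C4_edge_count F e) \<le> c / real (card F) * real (card (C4_copies F))"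
    using C4_edge_count_le[OF assms(1), of e] by linarith
qed

lemma C4_balanced_if_no_C4: "C4_copies F = {} \<Longrightarrow> C4_balanced c F"
  unfolding C4_balanced_def C4_edge_count_def by simp

lemma remove_unbalanced_edge:
  assumes "finite F" "c \<ge> 0" "card F \<le> m" "\<not> C4_balanced c F"
  obtains e where "e \<in> F"
    "real (card (C4_copies (F - {e}))) < (1 - c / real m) * real (card (C4_copies F))"
proof -
  obtain e where e: "e \<in> F"
    and bad: "real (C4_edge_count F e) > c / real (card F) * real (card (C4_copies F))"
    using assms(4) unfolding C4_balanced_def by force
  have "card F > 0"
    using e assms(1) card_gt_0_iff by blast
  then have "c / real m \<le> c / real (card F)"
    using assms(2,3) by (simp add: frac_le)
  then have "c / real m * real (card (C4_copies F)) \<le> c / real (card F) * real (card (C4_copies F))"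
    by (rule mult_right_mono) simp
  then have "c / real m * real (card (C4_copies F)) < real (C4_edge_count F e)"
    using bad by linarith
  then show thesis
    using that[OF e] card_C4_copies_Diff_singleton[OF assms(1), of e]
    by (simp add: algebra_simps)
qed

lemma C4_deletion_process:
  assumes "finite E" "0 \<le> c" "c \<le> real (card E)" "k \<le> card E"
  shows "\<exists>F\<subseteq>E. card E - k \<le> card F \<and> (C4_balanced c F \<or>
           real (card (C4_copies F)) \<le> real (card (C4_copies E)) * (1 - c / real (card E)) ^ k)"
  using assms(4)
proof (induction k)
  case 0
  show ?case by auto
next
  case (Suc k)
  let ?r = "1 - c / real (card E)"
  from Suc obtain F where F: "F \<subseteq> E" "card E - k \<le> card F"
    and alt: "C4_balanced c F \<or>
      real (card (C4_copies F)) \<le> real (card (C4_copies E)) * ?r ^ k"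
    by auto
  have finF: "finite F"
    using F(1) assms(1) finite_subset by blast
  show ?case
  proof (cases "C4_balanced c F")
    case True
    with F show ?thesis by auto
  next
    case False
    obtain e where e: "e \<in> F"
      and less: "real (card (C4_copies (F - {e}))) < ?r * real (card (C4_copies F))"
      using remove_unbalanced_edge[OF finF assms(2) card_mono[OF assms(1) F(1)] False] .
    have "?r \<ge> 0"
      using assms(3) Suc.prems by (cases "card E = 0") (auto simp: field_simps)
    then have "?r * real (card (C4_copies F)) \<le> ?r * (real (card (C4_copies E)) * ?r ^ k)"
      using alt False by (intro mult_left_mono) auto
    then have "real (card (C4_copies (F - {e}))) \<le> ?r * (real (card (C4_copies E)) * ?r ^ k)"
      using less by linarith
    moreover have "card E - Suc k \<le> card (F - {e})"
      using F(2) e finF by simp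
    ultimately show ?thesis
      using F(1) by (intro exI[of _ "F - {e}"]) (auto simp: algebra_simps)
  qed
qed

lemma C4_deletion_factor_small:
  fixes x :: real and m :: nat
  assumes "x \<ge> 2" and "16 * ln x < real m"
  shows "x ^ 4 * (1 - 16 * ln x / real m) ^ (m div 2) < 1"
proof -
  let ?c = "16 * ln x" and ?k = "m div 2"
  have "1/2 - (1/2)\<^sup>2 \<le> ln (1 + 1/2 :: real)"
    by (rule ln_one_plus_pos_lower_bound) auto
  also have "\<dots> \<le> ln x"
    using assms(1) by (intro ln_mono) auto
  finally have "ln x \<ge> 1/4"
    by (simp add: power2_eq_square)
  then have "real m > 4"
    using assms(2) by linarith
  then have "4 * real ?k > real m"
    by linarith
  then have "?c * real ?k / real m > 4 * ln x"
    using \<open>ln x \<ge> 1/4\<close> by (simp add: field_simps)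
  have "0 \<le> 1 - ?c / real m"
    using assms(2) \<open>real m > 4\<close> by (simp add: field_simps)
  then have "(1 - ?c / real m) ^ ?k \<le> exp (- (?c / real m)) ^ ?k"
    using exp_ge_add_one_self[of "- (?c / real m)"] by (intro power_mono) auto
  also have "\<dots> = exp (- (?c * real ?k / real m))"
    by (simp add: exp_of_nat_mult[symmetric] algebra_simps)
  also have "\<dots> < exp (- (4 * ln x))"
    using \<open>?c * real ?k / real m > 4 * ln x\<close> by simp
  also have "\<dots> = 1 / exp (ln (x ^ 4))"
    by (simp add: exp_minus ln_realpow divide_inverse)
  also have "\<dots> = 1 / x ^ 4"
    using assms(1) by simp
  finally show ?thesis
    using assms(1) by (simp add: field_simps)
qed

lemma C4_balanced_half_subgraph:
  fixes x :: real
  assumes "finite E" "x \<ge> 2" "real (card (C4_copies E)) \<le> x ^ 4"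
  shows "\<exists>F\<subseteq>E. real (card E) / 2 \<le> real (card F) \<and> C4_balanced (16 * ln x) F"
proof (cases "real (card E) \<le> 16 * ln x")
  case True
  then show ?thesis
    using C4_balanced_if_card_le[OF assms(1)] by auto
next
  case False
  define c where "c = 16 * ln x"
  define m where "m = card E"
  have "c \<ge> 0"
    using assms(2) unfolding c_def by simp
  then obtain F where F: "F \<subseteq> E" "m - m div 2 \<le> card F"
    and alt: "C4_balanced c F \<or> real (card (C4_copies F)) \<le>
      real (card (C4_copies E)) * (1 - c / real m) ^ (m div 2)"
    using C4_deletion_process[OF assms(1), of c "m div 2"] False unfolding c_def m_def by auto
  have "0 \<le> 1 - c / real m"
    using False \<open>c \<ge> 0\<close> unfolding c_def m_def by (simp add: field_simps)
  then have "real (card (C4_copies E)) * (1 - c / real m) ^ (m div 2)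
      \<le> x ^ 4 * (1 - c / real m) ^ (m div 2)"
    using assms(3) by (intro mult_right_mono) simp_all
  also have "\<dots> < 1"
    using C4_deletion_factor_small[OF assms(2), of m] False unfolding c_def m_def by simp
  finally have "C4_balanced c F \<or> card (C4_copies F) = 0"
    using alt by linarith
  moreover have "finite (C4_copies F)"
    using F(1) assms(1) by (metis finite_subset finite_C4_copies)
  ultimately have "C4_balanced c F"
    using C4_balanced_if_no_C4 by auto
  moreover have "real m / 2 \<le> real (card F)"
    using F(2) by linarith
  ultimately show ?thesis
    using F(1) unfolding c_def m_def by blast
qed

lemma simple_graph_card_vertices_ge_2:
  assumes "simple_graph V E" and "E \<noteq> {}"
  shows "card V \<ge> 2"
proof -
  obtain e where "e \<in> E"
    using assms(2) by blast
  then have "card e = 2" "e \<subseteq> V" "finite V"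
    using assms(1) unfolding simple_graph_def by auto
  then show ?thesis
    using card_mono[of V e] by simp
qed

theorem lemma2p10:
  fixes V :: "'a set" and E :: "'a set set"
  assumes "simple_graph V E" and "E \<noteq> {}"
  shows "\<exists>E' \<subseteq> E. real (card E') \<ge> real (card E) / 2 \<and>
           (\<forall>e\<in>E'. real (card {C \<in> C4_copies E'. e \<in> C})
              \<le> 16 * ln (real (card V)) / real (card E') * real (card (C4_copies E')))"
proof -
  have "finite E"
    using assms(1) finite_subset[of E "Pow V"] unfolding simple_graph_def by auto
  moreover have "real (card V) \<ge> 2"
    using simple_graph_card_vertices_ge_2[OF assms] by simp
  moreover have "real (card (C4_copies E)) \<le> real (card V) ^ 4"
    using card_C4_copies_le[OF assms(1)] by (simp flip: of_nat_power)
  ultimately show ?thesis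
    using C4_balanced_half_subgraph unfolding C4_balanced_def C4_edge_count_def by blast
qed

end
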